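(* Let $\Gamma$ be a finitely generated linear group whose centre is trivial. Then $\Gamma$ is uniquely directly decomposable.
   Context: A group is linear if it is a subgroup of $\mathrm{GL}_d(K)$ for some integer $d$ and field $K$. A group is indecomposable if it is nontrivial and, for every isomorphism with a direct product $\Gamma_1\times\Gamma_2$, one factor is trivial. A group is uniquely directly decomposable if it is isomorphic to a restricted direct sum of indecomposable groups, and this in a unique way up to isomorphism of the factors (i.e. any two such decompositions have factors that can be matched bijectively with isomorphic matched factors). The trivial group counts as uniquely directly decomposable (empty sum). *)

theory Defs
  imports "Jordan_Normal_Form.Matrix" "HOL-Algebra.Product_Groups"
begin

definition GL_group :: "nat \<Rightarrow> 'k::field itself \<Rightarrow> 'k mat monoid" where
  "GL_group d ty = \<lparr> carrier = {A \<in> carrier_mat d d. invertible_mat A},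
                     mult = (*), one = 1\<^sub>m d \<rparr>"

definition linear_group_over :: "'k::field itself \<Rightarrow> ('a, 'b) monoid_scheme \<Rightarrow> bool" where
  "linear_group_over ty G \<longleftrightarrow>
     group G \<and> (\<exists>d (\<phi> :: 'a \<Rightarrow> 'k mat). \<phi> \<in> hom G (GL_group d ty) \<and> inj_on \<phi> (carrier G))"

definition finitely_generated_group :: "('a, 'b) monoid_scheme \<Rightarrow> bool" where
  "finitely_generated_group G \<longleftrightarrow>
     (\<exists>S. finite S \<and> S \<subseteq> carrier G \<and> generate G S = carrier G)"

definition group_center :: "('a, 'b) monoid_scheme \<Rightarrow> 'a set" where
  "group_center G = {z \<in> carrier G. \<forall>g \<in> carrier G. z \<otimes>\<^bsub>G\<^esub> g = g \<otimes>\<^bsub>G\<^esub> z}"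

text \<open>Indecomposable: nontrivial, and any isomorphism with a direct product has a trivial
  factor. Factors can be taken with carrier type 'a, since each factor embeds into the group.\<close>
definition indecomposable_group :: "('a, 'b) monoid_scheme \<Rightarrow> bool" where
  "indecomposable_group H \<longleftrightarrow> group H \<and> carrier H \<noteq> {\<one>\<^bsub>H\<^esub>} \<and>
     (\<forall>(A :: 'a monoid) (B :: 'a monoid). group A \<and> group B \<and> H \<cong> A \<times>\<times> B \<longrightarrow>
        carrier A = {\<one>\<^bsub>A\<^esub>} \<or> carrier B = {\<one>\<^bsub>B\<^esub>})"

text \<open>A decomposition of G as restricted direct sum of indecomposable groups, indexed by I.
  Indices and factor carriers live in type 'a (no loss: nontrivial factors embed into G).\<close>
definition direct_decomposition :: "('a, 'b) monoid_scheme \<Rightarrow> 'a set \<Rightarrow> ('a \<Rightarrow> 'a monoid) \<Rightarrow> bool" where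
  "direct_decomposition G I F \<longleftrightarrow>
     (\<forall>i \<in> I. indecomposable_group (F i)) \<and> G \<cong> sum_group I F"

definition uniquely_directly_decomposable :: "('a, 'b) monoid_scheme \<Rightarrow> bool" where
  "uniquely_directly_decomposable G \<longleftrightarrow>
     (\<exists>I F. direct_decomposition G I F) \<and>
     (\<forall>I F J F'. direct_decomposition G I F \<and> direct_decomposition G J F' \<longrightarrow>
        (\<exists>\<sigma>. bij_betw \<sigma> I J \<and> (\<forall>i \<in> I. F i \<cong> F' (\<sigma> i))))"

end

theory Submission
  imports Defs "Jordan_Normal_Form.VS_Connect"
begin

(* In a centreless restricted direct sum P of groups F_i every factor is centreless, and the
   centralizer of the complement of F_i is F_i itself. If P is isomorphic to another such sum, the
   projections of the second sum onto a factor and onto its complement therefore restrict to a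
   splitting of F_i as a direct product; when F_i is indecomposable one side is trivial, so F_i is
   carried onto a factor of the second sum, and symmetry makes this a bijection of factors.
   For existence, the nontrivial factors of a centreless group are nonabelian; choosing
   noncommuting x_i, y_i in each F_i, the images of the x_i in GL_d(K) are linearly independent
   (x_i commutes with y_k exactly when i ~= k), so a centreless linear group has at most d^2
   nontrivial direct factors, and a decomposition with the maximal number of factors is a
   decomposition into indecomposables. *)

section \<open>Cross-commuting families of matrices\<close>

definition mat_to_vec :: "nat \<Rightarrow> 'a mat \<Rightarrow> 'a vec" where
  "mat_to_vec d M = vec (d * d) (\<lambda>t. M $$ (t div d, t mod d))"

lemma index_lt_square:
  assumes "r < d" "c < d"
  shows "r * d + c < d * (d :: nat)"
proof -
  have "r * d + c < Suc r * d" using assms(2) by simp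
  also have "\<dots> \<le> d * d" using assms(1) by (intro mult_le_mono1) simp
  finally show ?thesis .
qed

lemma mat_to_vec_index:
  assumes "r < d" "c < d"
  shows "mat_to_vec d M $ (r * d + c) = M $$ (r, c)"
  using assms index_lt_square[OF assms] by (simp add: mat_to_vec_def)

lemma inj_on_mat_to_vec: "inj_on (mat_to_vec d) (carrier_mat d d)"
proof (rule inj_onI)
  fix M M' assume "M \<in> carrier_mat d d" "M' \<in> carrier_mat d d" "mat_to_vec d M = mat_to_vec d M'"
  then show "M = M'"
    by (intro eq_matI) (auto simp flip: mat_to_vec_index)
qed

lemma mat_to_vec_carrier: "mat_to_vec d M \<in> carrier_vec (d * d)"
  by (simp add: mat_to_vec_def)

lemma commutator_index_sum:
  fixes M :: "'i \<Rightarrow> 'k::field mat"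
  assumes M: "\<And>i. i \<in> J \<Longrightarrow> M i \<in> carrier_mat d d" and N: "N \<in> carrier_mat d d"
    and "r < d" "s < d"
  shows "(\<Sum>i\<in>J. c i * ((M i * N) $$ (r, s) - (N * M i) $$ (r, s)))
       = (\<Sum>t<d. (\<Sum>i\<in>J. c i * M i $$ (r, t)) * N $$ (t, s))
         - (\<Sum>t<d. N $$ (r, t) * (\<Sum>i\<in>J. c i * M i $$ (t, s)))"
proof -
  have "(M i * N) $$ (r, s) - (N * M i) $$ (r, s)
      = (\<Sum>t<d. M i $$ (r, t) * N $$ (t, s)) - (\<Sum>t<d. N $$ (r, t) * M i $$ (t, s))"
    if "i \<in> J" for i
    using M[OF that] N assms(3,4)
    by (simp add: scalar_prod_def lessThan_atLeast0 mult.commute)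
  then show ?thesis
    by (simp add: right_diff_distrib sum_subtractf sum_distrib_left sum_distrib_right
        sum.swap[of _ J] mult_ac)
qed

(* Commuting a vanishing linear combination of the M i with N k kills every summand but the k-th. *)
lemma cross_commuting_mats_lincomb_eq_0:
  fixes M N :: "'i \<Rightarrow> 'k::field mat"
  assumes "finite J"
    and M: "\<And>i. i \<in> J \<Longrightarrow> M i \<in> carrier_mat d d" and N: "\<And>i. i \<in> J \<Longrightarrow> N i \<in> carrier_mat d d"
    and cross: "\<And>i k. i \<in> J \<Longrightarrow> k \<in> J \<Longrightarrow> i \<noteq> k \<Longrightarrow> M i * N k = N k * M i"
    and noncomm: "\<And>i. i \<in> J \<Longrightarrow> M i * N i \<noteq> N i * M i"
    and lincomb: "\<And>r s. r < d \<Longrightarrow> s < d \<Longrightarrow> (\<Sum>i\<in>J. c i * M i $$ (r, s)) = 0"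
    and k: "k \<in> J"
  shows "c k = 0"
proof (rule ccontr)
  assume "c k \<noteq> 0"
  have "M k * N k = N k * M k"
  proof (rule eq_matI)
    fix r s assume "r < dim_row (N k * M k)" "s < dim_col (N k * M k)"
    then have rs: "r < d" "s < d" using M[OF k] N[OF k] by auto
    let ?comm = "\<lambda>i. (M i * N k) $$ (r, s) - (N k * M i) $$ (r, s)"
    have "(\<Sum>i\<in>J. c i * ?comm i) = 0"
      using commutator_index_sum[where J = J and M = M, OF M N[OF k] rs] lincomb rs by simp
    moreover have "(\<Sum>i\<in>J. c i * ?comm i) = c k * ?comm k"
      using cross k by (intro sum.remove[OF \<open>finite J\<close> k, THEN trans] sum.neutral) auto
    ultimately show "(M k * N k) $$ (r, s) = (N k * M k) $$ (r, s)"
      using \<open>c k \<noteq> 0\<close> by simp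
  qed (use M[OF k] N[OF k] in auto)
  then show False using noncomm[OF k] by contradiction
qed

lemma cross_commuting_mats_inj_on:
  fixes M N :: "'i \<Rightarrow> 'k::field mat"
  assumes M: "\<And>i. i \<in> J \<Longrightarrow> M i \<in> carrier_mat d d"
    and cross: "\<And>i k. i \<in> J \<Longrightarrow> k \<in> J \<Longrightarrow> i \<noteq> k \<Longrightarrow> M i * N k = N k * M i"
    and noncomm: "\<And>i. i \<in> J \<Longrightarrow> M i * N i \<noteq> N i * M i"
  shows "inj_on (\<lambda>i. mat_to_vec d (M i)) J"
proof (rule inj_onI)
  fix i k assume ik: "i \<in> J" "k \<in> J" "mat_to_vec d (M i) = mat_to_vec d (M k)"
  then have "M i = M k" using inj_on_mat_to_vec M unfolding inj_on_def by blast
  then show "i = k" using cross noncomm ik by metis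
qed

lemma (in vec_space) lin_indpt_cross_commuting_mats:
  fixes M N :: "'i \<Rightarrow> 'a mat"
  assumes n: "n = d * d"
    and M: "\<And>i. i \<in> J \<Longrightarrow> M i \<in> carrier_mat d d" and N: "\<And>i. i \<in> J \<Longrightarrow> N i \<in> carrier_mat d d"
    and cross: "\<And>i k. i \<in> J \<Longrightarrow> k \<in> J \<Longrightarrow> i \<noteq> k \<Longrightarrow> M i * N k = N k * M i"
    and noncomm: "\<And>i. i \<in> J \<Longrightarrow> M i * N i \<noteq> N i * M i"
  shows "lin_indpt ((\<lambda>i. mat_to_vec d (M i)) ` J)"
proof
  let ?v = "\<lambda>i. mat_to_vec d (M i)"
  assume "lin_dep (?v ` J)"
  then obtain A a w where A: "finite A" "A \<subseteq> ?v ` J" and lc: "lincomb a A = 0\<^sub>v n"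
    and w: "w \<in> A" "a w \<noteq> 0"
    unfolding lin_dep_def by auto
  obtain K where K: "K \<subseteq> J" "A = ?v ` K" using A(2) subset_imageE by blast
  have inj_K: "inj_on ?v K"
    using inj_on_subset[OF cross_commuting_mats_inj_on[where J = J and M = M and N = N, OF M cross noncomm] K(1)] .
  have "finite K" using A(1) K(2) inj_K finite_image_iff by blast
  have A_carrier: "A \<subseteq> carrier_vec n" using A(2) n by (auto simp: mat_to_vec_carrier)
  have entries: "(\<Sum>i\<in>K. a (?v i) * M i $$ (r, s)) = 0" if rs: "r < d" "s < d" for r s
  proof -
    have "0 = lincomb a A $ (r * d + s)"
      using lc index_lt_square[OF rs] n by simp
    also have "\<dots> = (\<Sum>u\<in>A. a u * u $ (r * d + s))"
      using lincomb_index[OF _ A_carrier] index_lt_square[OF rs] n by simp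
    also have "\<dots> = (\<Sum>i\<in>K. a (?v i) * M i $$ (r, s))"
      unfolding K(2) sum.reindex[OF inj_K] by (simp add: mat_to_vec_index[OF rs])
    finally show ?thesis by simp
  qed
  have "a (?v k) = 0" if "k \<in> K" for k
  proof (rule cross_commuting_mats_lincomb_eq_0[where J = K and c = "\<lambda>i. a (?v i)"])
    show "M i * N i \<noteq> N i * M i" if "i \<in> K" for i
      using noncomm K(1) that by blast
  qed (use \<open>finite K\<close> K(1) M N cross entries that in blast)+
  then show False using w K(2) by blast
qed

lemma cross_commuting_mats_card_le:
  fixes M N :: "'i \<Rightarrow> 'k::field mat"
  assumes M: "\<And>i. i \<in> J \<Longrightarrow> M i \<in> carrier_mat d d" and N: "\<And>i. i \<in> J \<Longrightarrow> N i \<in> carrier_mat d d"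
    and cross: "\<And>i k. i \<in> J \<Longrightarrow> k \<in> J \<Longrightarrow> i \<noteq> k \<Longrightarrow> M i * N k = N k * M i"
    and noncomm: "\<And>i. i \<in> J \<Longrightarrow> M i * N i \<noteq> N i * M i"
  shows "finite J \<and> card J \<le> d * d"
proof -
  interpret V: vec_space "TYPE('k)" "d * d" .
  have "(\<lambda>i. mat_to_vec d (M i)) ` J \<subseteq> carrier_vec (d * d)"
    by (auto simp: mat_to_vec_carrier)
  moreover have "V.lin_indpt ((\<lambda>i. mat_to_vec d (M i)) ` J)"
    by (rule V.lin_indpt_cross_commuting_mats[where J = J and M = M and N = N, OF refl M N cross noncomm])
  ultimately have "finite ((\<lambda>i. mat_to_vec d (M i)) ` J)" "card ((\<lambda>i. mat_to_vec d (M i)) ` J) \<le> V.dim"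
    using V.li_le_dim[OF V.fin_dim] by auto
  then show ?thesis
    using cross_commuting_mats_inj_on[where J = J and M = M and N = N, OF M cross noncomm] by (simp add: finite_image_iff card_image V.dim_is_n)
qed

lemma group_isomorphisms_of_is_iso:
  assumes "group G" "G \<cong> H"
  obtains \<psi> \<psi>' where "group_isomorphisms G H \<psi> \<psi>'"
proof -
  obtain \<psi> where "\<psi> \<in> iso G H" using assms(2) by (auto simp: is_iso_def)
  then show ?thesis using that by (auto simp: group.iso_iff_group_isomorphisms[OF assms(1)])
qed

lemma group_isomorphisms_image_image:
  assumes "group_isomorphisms G H \<psi> \<psi>'" "S \<subseteq> carrier G"
  shows "\<psi>' ` \<psi> ` S = S"
proof -
  have "\<psi>' ` \<psi> ` S = (\<lambda>x. x) ` S"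
    unfolding image_image using assms by (intro image_cong) (auto simp: group_isomorphisms_def)
  then show ?thesis by simp
qed

lemma group_isomorphisms_image_carrier:
  assumes "group_isomorphisms G H \<psi> \<psi>'"
  shows "\<psi> ` carrier G = carrier H"
proof
  show "\<psi> ` carrier G \<subseteq> carrier H"
    using assms hom_in_carrier[of \<psi> G H] unfolding group_isomorphisms_def by blast
  show "carrier H \<subseteq> \<psi> ` carrier G"
    using assms unfolding group_isomorphisms_def by (metis hom_in_carrier image_eqI subsetI)
qed

lemma group_isomorphisms_eq_one_iff:
  assumes G: "group G" and H: "group H" and \<psi>: "group_isomorphisms G H \<psi> \<psi>'" and x: "x \<in> carrier G"
  shows "\<psi> x = \<one>\<^bsub>H\<^esub> \<longleftrightarrow> x = \<one>\<^bsub>G\<^esub>"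
proof
  have hom: "\<psi> \<in> hom G H" "\<psi>' \<in> hom H G" and inv: "\<psi>' (\<psi> x) = x"
    using \<psi> x by (auto simp: group_isomorphisms_def)
  show "\<psi> x = \<one>\<^bsub>H\<^esub> \<Longrightarrow> x = \<one>\<^bsub>G\<^esub>" using inv hom_one[OF hom(2) H G] by simp
  show "x = \<one>\<^bsub>G\<^esub> \<Longrightarrow> \<psi> x = \<one>\<^bsub>H\<^esub>" using hom_one[OF hom(1) G H] by simp
qed

lemma group_centerI:
  "z \<in> carrier G \<Longrightarrow> (\<And>g. g \<in> carrier G \<Longrightarrow> z \<otimes>\<^bsub>G\<^esub> g = g \<otimes>\<^bsub>G\<^esub> z) \<Longrightarrow> z \<in> group_center G"
  unfolding group_center_def by (rule CollectI) (intro conjI ballI)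

lemma group_centerD:
  assumes "z \<in> group_center G"
  shows "z \<in> carrier G" and "g \<in> carrier G \<Longrightarrow> z \<otimes>\<^bsub>G\<^esub> g = g \<otimes>\<^bsub>G\<^esub> z"
  using assms unfolding group_center_def by (simp_all only: mem_Collect_eq Ball_def)

lemma group_center_subset: "group_center G \<subseteq> carrier G"
  unfolding group_center_def by (rule Collect_restrict)

lemma not_in_group_centerE:
  assumes "a \<in> carrier G" "a \<notin> group_center G"
  obtains b where "b \<in> carrier G" "a \<otimes>\<^bsub>G\<^esub> b \<noteq> b \<otimes>\<^bsub>G\<^esub> a"
  using assms by (meson group_centerI)

lemma hom_image_group_center:
  assumes h: "h \<in> hom G H" and onto: "h ` carrier G = carrier H"
  shows "h ` group_center G \<subseteq> group_center H"
proof
  fix w assume "w \<in> h ` group_center G"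
  then obtain z where z: "z \<in> group_center G" and w: "w = h z" by blast
  show "w \<in> group_center H"
  proof (rule group_centerI)
    show "w \<in> carrier H" using hom_in_carrier[OF h group_centerD(1)[OF z]] w by simp
    fix g assume "g \<in> carrier H"
    then obtain g' where g': "g' \<in> carrier G" "g = h g'" using onto by blast
    have "h z \<otimes>\<^bsub>H\<^esub> h g' = h (z \<otimes>\<^bsub>G\<^esub> g')" using hom_mult[OF h group_centerD(1)[OF z] g'(1)] by simp
    also have "\<dots> = h (g' \<otimes>\<^bsub>G\<^esub> z)" using group_centerD(2)[OF z g'(1)] by simp
    also have "\<dots> = h g' \<otimes>\<^bsub>H\<^esub> h z" using hom_mult[OF h g'(1) group_centerD(1)[OF z]] .
    finally show "w \<otimes>\<^bsub>H\<^esub> g = g \<otimes>\<^bsub>H\<^esub> w" using g'(2) w by simp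
  qed
qed

lemma group_isomorphisms_group_center:
  assumes \<psi>: "group_isomorphisms G H \<psi> \<psi>'"
  shows "\<psi> ` group_center G = group_center H"
proof
  have \<psi>': "group_isomorphisms H G \<psi>' \<psi>" using group_isomorphisms_sym[OF \<psi>] .
  have hom: "\<psi> \<in> hom G H" "\<psi>' \<in> hom H G" using \<psi> by (simp_all add: group_isomorphisms_def)
  show "\<psi> ` group_center G \<subseteq> group_center H"
    using hom(1) group_isomorphisms_image_carrier[OF \<psi>] by (rule hom_image_group_center)
  have "group_center H = \<psi> ` \<psi>' ` group_center H"
    using group_isomorphisms_image_image[OF \<psi>' group_center_subset] by simp
  also have "\<dots> \<subseteq> \<psi> ` group_center G"
    using hom_image_group_center[OF hom(2) group_isomorphisms_image_carrier[OF \<psi>']] by (rule image_mono)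
  finally show "group_center H \<subseteq> \<psi> ` group_center G" .
qed

lemma group_center_trivial_iso:
  assumes G: "group G" and H: "group H" and iso: "G \<cong> H" and Z: "group_center G = {\<one>\<^bsub>G\<^esub>}"
  shows "group_center H = {\<one>\<^bsub>H\<^esub>}"
proof -
  obtain \<psi> \<psi>' where \<psi>: "group_isomorphisms G H \<psi> \<psi>'"
    using group_isomorphisms_of_is_iso[OF G iso] .
  then have "group_center H = {\<psi> \<one>\<^bsub>G\<^esub>}"
    using group_isomorphisms_group_center[OF \<psi>] Z by simp
  then show ?thesis
    using \<psi> hom_one[OF _ G H] by (simp add: group_isomorphisms_def)
qed

lemma inj_hom_commute_iff:
  assumes h: "h \<in> hom G H" and inj: "inj_on h (carrier G)" and G: "monoid G"
    and x: "x \<in> carrier G" and y: "y \<in> carrier G"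
  shows "h x \<otimes>\<^bsub>H\<^esub> h y = h y \<otimes>\<^bsub>H\<^esub> h x \<longleftrightarrow> x \<otimes>\<^bsub>G\<^esub> y = y \<otimes>\<^bsub>G\<^esub> x"
  using inj_on_eq_iff[OF inj monoid.m_closed[OF G x y] monoid.m_closed[OF G y x]]
  by (simp add: hom_mult[OF h x y] hom_mult[OF h y x])

lemma trivial_groups_iso:
  assumes G: "group G" and H: "group H" and "carrier G = {\<one>\<^bsub>G\<^esub>}" "carrier H = {\<one>\<^bsub>H\<^esub>}"
  shows "G \<cong> H"
proof -
  have "(\<lambda>_. \<one>\<^bsub>H\<^esub>) \<in> hom G H" "(\<lambda>_. \<one>\<^bsub>G\<^esub>) \<in> hom H G"
    using monoid.l_one[OF group.is_monoid[OF G]] monoid.l_one[OF group.is_monoid[OF H]]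
      monoid.one_closed[OF group.is_monoid[OF G]] monoid.one_closed[OF group.is_monoid[OF H]]
    by (simp_all add: hom_def)
  then have "group_isomorphisms G H (\<lambda>_. \<one>\<^bsub>H\<^esub>) (\<lambda>_. \<one>\<^bsub>G\<^esub>)"
    using assms(3,4) by (simp add: group_isomorphisms_def)
  then show ?thesis by (rule is_isoI[OF group_isomorphisms_imp_iso])
qed

lemma monoid_truncate_simps [simp]:
  "carrier (monoid.truncate G) = carrier G" "one (monoid.truncate G) = one G"
  "mult (monoid.truncate G) = mult G"
  by (simp_all add: monoid.truncate_def)

lemma group_truncate: "group G \<Longrightarrow> group (monoid.truncate G)"
  unfolding group_def group_axioms_def monoid_def Units_def by simp

lemma indecomposable_groupD:
  assumes "indecomposable_group H"
  shows "group H" and "carrier H \<noteq> {\<one>\<^bsub>H\<^esub>}"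
  using assms unfolding indecomposable_group_def by simp_all

lemma (in group) nontrivial_elemE:
  assumes "carrier G \<noteq> {\<one>}"
  obtains a where "a \<in> carrier G" "a \<noteq> \<one>"
  using assms one_closed by blast

(* The two projections of an internal direct decomposition G = pi(G) x kappa(G). *)
definition complementary_projections :: "('a, 'b) monoid_scheme \<Rightarrow> ('a \<Rightarrow> 'a) \<Rightarrow> ('a \<Rightarrow> 'a) \<Rightarrow> bool"
  where "complementary_projections G \<pi> \<kappa> \<longleftrightarrow> \<pi> \<in> hom G G \<and> \<kappa> \<in> hom G G \<and>
    (\<forall>x\<in>carrier G. \<pi> x \<otimes>\<^bsub>G\<^esub> \<kappa> x = x \<and> \<pi> (\<kappa> x) = \<one>\<^bsub>G\<^esub> \<and> \<kappa> (\<pi> x) = \<one>\<^bsub>G\<^esub>)"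

context group
begin

lemma complementary_projections_commute:
  assumes P: "complementary_projections G \<pi> \<kappa>" and x: "x \<in> carrier G" and y: "y \<in> carrier G"
  shows "\<pi> x \<otimes> \<kappa> y = \<kappa> y \<otimes> \<pi> x"
proof -
  have hom: "\<pi> \<in> hom G G" "\<kappa> \<in> hom G G" and split: "\<And>z. z \<in> carrier G \<Longrightarrow> \<pi> z \<otimes> \<kappa> z = z"
    using P by (auto simp: complementary_projections_def)
  note closed = hom_in_carrier[OF hom(1)] hom_in_carrier[OF hom(2)]
  have "\<pi> y \<otimes> (\<pi> x \<otimes> \<kappa> y) \<otimes> \<kappa> x = \<pi> (y \<otimes> x) \<otimes> \<kappa> (y \<otimes> x)"
    using x y closed by (simp add: hom_mult[OF hom(1)] hom_mult[OF hom(2)] m_assoc)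
  also have "\<dots> = (\<pi> y \<otimes> \<kappa> y) \<otimes> (\<pi> x \<otimes> \<kappa> x)"
    using x y split by simp
  also have "\<dots> = \<pi> y \<otimes> (\<kappa> y \<otimes> \<pi> x) \<otimes> \<kappa> x"
    using x y closed by (simp add: m_assoc)
  finally show ?thesis
    using x y closed by simp
qed

lemma complementary_projections_sym:
  "complementary_projections G \<pi> \<kappa> \<Longrightarrow> complementary_projections G \<kappa> \<pi>"
  using complementary_projections_commute unfolding complementary_projections_def by metis

lemma complementary_projection_preserves_commute:
  assumes P: "complementary_projections G \<pi> \<kappa>" and x: "x \<in> carrier G" and y: "y \<in> carrier G"
    and xy: "x \<otimes> y = y \<otimes> x"
  shows "\<pi> x \<otimes> y = y \<otimes> \<pi> x"
proof -
  have hom: "\<pi> \<in> hom G G" "\<kappa> \<in> hom G G" and split: "\<pi> y \<otimes> \<kappa> y = y"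
    using P y by (auto simp: complementary_projections_def)
  note closed = hom_in_carrier[OF hom(1)] hom_in_carrier[OF hom(2)]
  have \<pi>\<pi>: "\<pi> x \<otimes> \<pi> y = \<pi> y \<otimes> \<pi> x"
    using x y xy by (metis hom(1) hom_mult)
  have "\<pi> x \<otimes> y = \<pi> x \<otimes> \<pi> y \<otimes> \<kappa> y"
    using x y closed split by (simp add: m_assoc)
  also have "\<dots> = \<pi> y \<otimes> (\<pi> x \<otimes> \<kappa> y)"
    using x y closed \<pi>\<pi> by (simp add: m_assoc)
  also have "\<dots> = y \<otimes> \<pi> x"
    using x y closed split complementary_projections_commute[OF P x y] by (simp flip: m_assoc)
  finally show ?thesis .
qed

lemma complementary_projections_iso_DirProd:
  assumes P: "complementary_projections G \<pi> \<kappa>"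
  shows "(\<lambda>x. (\<pi> x, \<kappa> x)) \<in> iso G (G\<lparr>carrier := kernel G G \<kappa>\<rparr> \<times>\<times> G\<lparr>carrier := kernel G G \<pi>\<rparr>)"
    (is "?f \<in> iso G ?P")
proof -
  have hom: "\<pi> \<in> hom G G" "\<kappa> \<in> hom G G"
    and split: "\<And>x. x \<in> carrier G \<Longrightarrow> \<pi> x \<otimes> \<kappa> x = x"
    and \<pi>\<kappa>: "\<And>x. x \<in> carrier G \<Longrightarrow> \<pi> (\<kappa> x) = \<one>"
    and \<kappa>\<pi>: "\<And>x. x \<in> carrier G \<Longrightarrow> \<kappa> (\<pi> x) = \<one>"
    using P by (auto simp: complementary_projections_def)
  note closed = hom_in_carrier[OF hom(1)] hom_in_carrier[OF hom(2)]
  have f_closed: "?f x \<in> carrier ?P" if "x \<in> carrier G" for x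
    using that closed \<pi>\<kappa> \<kappa>\<pi> by (simp add: kernel_def)
  have f_mult: "?f (a \<otimes> b) = (a, b)" if "a \<in> kernel G G \<kappa>" "b \<in> kernel G G \<pi>" for a b
  proof -
    have ab: "a \<in> carrier G" "b \<in> carrier G" "\<kappa> a = \<one>" "\<pi> b = \<one>"
      using that by (simp_all add: kernel_def)
    then have "\<pi> a = a" "\<kappa> b = b"
      using split[of a] split[of b] closed by simp_all
    with ab show ?thesis by (simp add: hom_mult[OF hom(1)] hom_mult[OF hom(2)])
  qed
  show ?thesis
  proof (rule isoI)
    show "?f \<in> hom G ?P"
      using f_closed by (intro homI) (simp_all add: hom_mult[OF hom(1)] hom_mult[OF hom(2)])
    show "bij_betw ?f (carrier G) (carrier ?P)"
    proof (rule bij_betw_byWitness[where f' = "\<lambda>(a, b). a \<otimes> b"])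
      show "\<forall>x\<in>carrier G. (\<lambda>(a, b). a \<otimes> b) (?f x) = x"
        using split by simp
      show "\<forall>p\<in>carrier ?P. ?f ((\<lambda>(a, b). a \<otimes> b) p) = p"
        using f_mult by auto
      show "?f ` carrier G \<subseteq> carrier ?P"
        using f_closed by blast
      show "(\<lambda>(a, b). a \<otimes> b) ` carrier ?P \<subseteq> carrier G"
        by (auto simp: kernel_def)
    qed
  qed
qed

end

lemma indecomposable_complementary_projections:
  fixes H :: "'a monoid"
  assumes ind: "indecomposable_group H" and P: "complementary_projections H \<pi> \<kappa>"
  shows "(\<forall>x\<in>carrier H. \<pi> x = \<one>\<^bsub>H\<^esub>) \<or> (\<forall>x\<in>carrier H. \<kappa> x = \<one>\<^bsub>H\<^esub>)"
proof -
  interpret group H by (rule indecomposable_groupD(1)[OF ind])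
  have hom: "\<pi> \<in> hom H H" "\<kappa> \<in> hom H H"
    and \<pi>\<kappa>: "\<And>x. x \<in> carrier H \<Longrightarrow> \<pi> (\<kappa> x) = \<one>\<^bsub>H\<^esub>" and \<kappa>\<pi>: "\<And>x. x \<in> carrier H \<Longrightarrow> \<kappa> (\<pi> x) = \<one>\<^bsub>H\<^esub>"
    using P by (auto simp: complementary_projections_def)
  have kernel_group: "group (H\<lparr>carrier := kernel H H h\<rparr>)" if "h \<in> hom H H" for h
  proof -
    have "subgroup (kernel H H h) H"
      using that by (intro group_hom.subgroup_kernel) (simp add: group_hom_def group_hom_axioms_def is_group)
    then show ?thesis by (rule subgroup.subgroup_is_group) (rule is_group)
  qed
  have "H \<cong> H\<lparr>carrier := kernel H H \<kappa>\<rparr> \<times>\<times> H\<lparr>carrier := kernel H H \<pi>\<rparr>"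
    using complementary_projections_iso_DirProd[OF P] by (rule is_isoI)
  then have "carrier (H\<lparr>carrier := kernel H H \<kappa>\<rparr>) = {\<one>\<^bsub>H\<lparr>carrier := kernel H H \<kappa>\<rparr>\<^esub>}
      \<or> carrier (H\<lparr>carrier := kernel H H \<pi>\<rparr>) = {\<one>\<^bsub>H\<lparr>carrier := kernel H H \<pi>\<rparr>\<^esub>}"
    using ind kernel_group[OF hom(1)] kernel_group[OF hom(2)]
    unfolding indecomposable_group_def by blast
  then have trivial_kernel: "kernel H H \<kappa> = {\<one>\<^bsub>H\<^esub>} \<or> kernel H H \<pi> = {\<one>\<^bsub>H\<^esub>}"
    by simp
  have in_kernel: "\<pi> x \<in> kernel H H \<kappa>" "\<kappa> x \<in> kernel H H \<pi>" if "x \<in> carrier H" for x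
    using that hom_in_carrier[OF hom(1)] hom_in_carrier[OF hom(2)] \<pi>\<kappa> \<kappa>\<pi> by (simp_all add: kernel_def)
  from trivial_kernel show ?thesis
  proof
    assume "kernel H H \<kappa> = {\<one>\<^bsub>H\<^esub>}"
    then have "\<pi> x = \<one>\<^bsub>H\<^esub>" if "x \<in> carrier H" for x
      using in_kernel(1)[OF that] by simp
    then show ?thesis by blast
  next
    assume "kernel H H \<pi> = {\<one>\<^bsub>H\<^esub>}"
    then have "\<kappa> x = \<one>\<^bsub>H\<^esub>" if "x \<in> carrier H" for x
      using in_kernel(2)[OF that] by simp
    then show ?thesis by blast
  qed
qed

lemma complementary_projections_transfer:
  assumes G: "group G" and H: "group H" and \<psi>: "group_isomorphisms G H \<psi> \<psi>'"
    and P: "complementary_projections H \<pi> \<kappa>"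
  shows "complementary_projections G (\<psi>' \<circ> \<pi> \<circ> \<psi>) (\<psi>' \<circ> \<kappa> \<circ> \<psi>)"
proof -
  have \<psi>_hom: "\<psi> \<in> hom G H" "\<psi>' \<in> hom H G"
    and \<psi>_inv: "\<And>x. x \<in> carrier G \<Longrightarrow> \<psi>' (\<psi> x) = x" "\<And>y. y \<in> carrier H \<Longrightarrow> \<psi> (\<psi>' y) = y"
    using \<psi> by (auto simp: group_isomorphisms_def)
  have hom: "\<pi> \<in> hom H H" "\<kappa> \<in> hom H H"
    and split: "\<And>y. y \<in> carrier H \<Longrightarrow> \<pi> y \<otimes>\<^bsub>H\<^esub> \<kappa> y = y"
    and \<pi>\<kappa>: "\<And>y. y \<in> carrier H \<Longrightarrow> \<pi> (\<kappa> y) = \<one>\<^bsub>H\<^esub>"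
    and \<kappa>\<pi>: "\<And>y. y \<in> carrier H \<Longrightarrow> \<kappa> (\<pi> y) = \<one>\<^bsub>H\<^esub>"
    using P by (auto simp: complementary_projections_def)
  note closed = hom_in_carrier[OF \<psi>_hom(1)] hom_in_carrier[OF hom(1)] hom_in_carrier[OF hom(2)]
  show ?thesis
    unfolding complementary_projections_def
  proof (intro conjI ballI)
    show "\<psi>' \<circ> \<pi> \<circ> \<psi> \<in> hom G G" "\<psi>' \<circ> \<kappa> \<circ> \<psi> \<in> hom G G"
      by (rule hom_compose[OF \<psi>_hom(1) hom_compose[OF hom(1) \<psi>_hom(2)]]
          hom_compose[OF \<psi>_hom(1) hom_compose[OF hom(2) \<psi>_hom(2)]])+
    fix x assume x: "x \<in> carrier G"
    show "(\<psi>' \<circ> \<pi> \<circ> \<psi>) x \<otimes>\<^bsub>G\<^esub> (\<psi>' \<circ> \<kappa> \<circ> \<psi>) x = x"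
      using x closed split \<psi>_inv by (simp flip: hom_mult[OF \<psi>_hom(2)])
    show "(\<psi>' \<circ> \<pi> \<circ> \<psi>) ((\<psi>' \<circ> \<kappa> \<circ> \<psi>) x) = \<one>\<^bsub>G\<^esub>"
      using x closed \<psi>_inv \<pi>\<kappa> hom_one[OF \<psi>_hom(2) H G] by simp
    show "(\<psi>' \<circ> \<kappa> \<circ> \<psi>) ((\<psi>' \<circ> \<pi> \<circ> \<psi>) x) = \<one>\<^bsub>G\<^esub>"
      using x closed \<psi>_inv \<kappa>\<pi> hom_one[OF \<psi>_hom(2) H G] by simp
  qed
qed

section \<open>Restricted direct sums\<close>

locale group_family =
  fixes I :: "'i set" and F :: "'i \<Rightarrow> 'g monoid"
  assumes group_F: "\<And>i. i \<in> I \<Longrightarrow> group (F i)"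
begin

abbreviation dsum :: "('i \<Rightarrow> 'g) monoid" where "dsum \<equiv> sum_group I F"

sublocale dsum: group dsum
  by (simp add: group_F)

lemma carrier_dsum: "carrier dsum = {x \<in> \<Pi>\<^sub>E i\<in>I. carrier (F i). finite {i \<in> I. x i \<noteq> \<one>\<^bsub>F i\<^esub>}}"
  by (simp add: carrier_sum_group group_F)

lemma dsum_apply_closed: "x \<in> carrier dsum \<Longrightarrow> i \<in> I \<Longrightarrow> x i \<in> carrier (F i)"
  by (auto simp: carrier_dsum)

lemma dsum_eqI: "x \<in> carrier dsum \<Longrightarrow> y \<in> carrier dsum \<Longrightarrow> (\<And>i. i \<in> I \<Longrightarrow> x i = y i) \<Longrightarrow> x = y"
  by (auto simp: carrier_dsum intro: PiE_ext)

lemma dsum_eq_one_iff: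
  assumes "x \<in> carrier dsum"
  shows "x = \<one>\<^bsub>dsum\<^esub> \<longleftrightarrow> (\<forall>i\<in>I. x i = \<one>\<^bsub>F i\<^esub>)"
proof
  assume "\<forall>i\<in>I. x i = \<one>\<^bsub>F i\<^esub>"
  then show "x = \<one>\<^bsub>dsum\<^esub>" by (intro dsum_eqI[OF assms dsum.one_closed]) simp
qed simp

lemma dsum_commute_iff:
  "x \<otimes>\<^bsub>dsum\<^esub> y = y \<otimes>\<^bsub>dsum\<^esub> x \<longleftrightarrow> (\<forall>i\<in>I. x i \<otimes>\<^bsub>F i\<^esub> y i = y i \<otimes>\<^bsub>F i\<^esub> x i)"
  by (simp add: fun_eq_iff Ball_def)

lemma dsum_commuteD:
  "x \<otimes>\<^bsub>dsum\<^esub> y = y \<otimes>\<^bsub>dsum\<^esub> x \<Longrightarrow> i \<in> I \<Longrightarrow> x i \<otimes>\<^bsub>F i\<^esub> y i = y i \<otimes>\<^bsub>F i\<^esub> x i"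
  unfolding dsum_commute_iff by (rule bspec)

lemma eval_hom: "i \<in> I \<Longrightarrow> (\<lambda>x. x i) \<in> hom dsum (F i)"
  by (rule homI) (simp_all add: dsum_apply_closed)

definition single :: "'i \<Rightarrow> 'g \<Rightarrow> 'i \<Rightarrow> 'g"
  where "single i a = (\<lambda>k\<in>I. if k = i then a else \<one>\<^bsub>F k\<^esub>)"

lemma single_apply: "k \<in> I \<Longrightarrow> single i a k = (if k = i then a else \<one>\<^bsub>F k\<^esub>)"
  by (simp add: single_def)

lemma single_closed:
  assumes i: "i \<in> I" and a: "a \<in> carrier (F i)"
  shows "single i a \<in> carrier dsum"
proof -
  have "single i a \<in> (\<Pi>\<^sub>E k\<in>I. carrier (F k))"
    unfolding single_def restrict_PiE_iff
    using a monoid.one_closed[OF group.is_monoid[OF group_F]] by simp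
  moreover have "{k \<in> I. single i a k \<noteq> \<one>\<^bsub>F k\<^esub>} \<subseteq> {i}"
    by (auto simp: single_apply split: if_splits)
  then have "finite {k \<in> I. single i a k \<noteq> \<one>\<^bsub>F k\<^esub>}"
    using finite_subset by blast
  ultimately show ?thesis by (simp add: carrier_dsum)
qed

lemma single_hom:
  assumes i: "i \<in> I"
  shows "single i \<in> hom (F i) dsum"
proof (rule homI)
  show "single i a \<in> carrier dsum" if "a \<in> carrier (F i)" for a
    using single_closed[OF i that] .
  show "single i (a \<otimes>\<^bsub>F i\<^esub> b) = single i a \<otimes>\<^bsub>dsum\<^esub> single i b" for a b
    using monoid.l_one[OF group.is_monoid[OF group_F]] monoid.one_closed[OF group.is_monoid[OF group_F]]
    unfolding mult_sum_group single_def by (intro restrict_ext) simp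
qed

lemma single_one: "single i \<one>\<^bsub>F i\<^esub> = \<one>\<^bsub>dsum\<^esub>"
  by (auto simp: single_def)

lemma single_eq_single:
  assumes "i \<in> I" "k \<in> I" "single i a = single k b" "a \<noteq> \<one>\<^bsub>F i\<^esub>"
  shows "i = k \<and> a = b"
  using assms by (metis single_apply)

lemma single_eq_one_iff: "i \<in> I \<Longrightarrow> single i a = \<one>\<^bsub>dsum\<^esub> \<longleftrightarrow> a = \<one>\<^bsub>F i\<^esub>"
  using single_eq_single[of i i a "\<one>\<^bsub>F i\<^esub>"] by (auto simp: single_one)

lemma single_commute:
  assumes "i \<in> I" "y i = \<one>\<^bsub>F i\<^esub>" "a \<in> carrier (F i)" "y \<in> carrier dsum"
  shows "single i a \<otimes>\<^bsub>dsum\<^esub> y = y \<otimes>\<^bsub>dsum\<^esub> single i a"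
  unfolding dsum_commute_iff
  using assms group.is_monoid[OF group_F] dsum_apply_closed by (simp add: single_apply)

lemma single_commuteD:
  assumes "single i a \<otimes>\<^bsub>dsum\<^esub> single i b = single i b \<otimes>\<^bsub>dsum\<^esub> single i a" "i \<in> I"
  shows "a \<otimes>\<^bsub>F i\<^esub> b = b \<otimes>\<^bsub>F i\<^esub> a"
  using dsum_commuteD[OF assms] assms(2) by (simp add: single_apply)

definition erase :: "'i \<Rightarrow> ('i \<Rightarrow> 'g) \<Rightarrow> 'i \<Rightarrow> 'g"
  where "erase j x = (\<lambda>k\<in>I. if k = j then \<one>\<^bsub>F k\<^esub> else x k)"

lemma erase_closed:
  assumes x: "x \<in> carrier dsum"
  shows "erase j x \<in> carrier dsum"
proof -
  have "erase j x \<in> (\<Pi>\<^sub>E k\<in>I. carrier (F k))"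
    unfolding erase_def restrict_PiE_iff
    using dsum_apply_closed[OF x] monoid.one_closed[OF group.is_monoid[OF group_F]] by simp
  moreover have "{k \<in> I. erase j x k \<noteq> \<one>\<^bsub>F k\<^esub>} \<subseteq> {k \<in> I. x k \<noteq> \<one>\<^bsub>F k\<^esub>}"
    by (auto simp: erase_def)
  then have "finite {k \<in> I. erase j x k \<noteq> \<one>\<^bsub>F k\<^esub>}"
    using x finite_subset by (auto simp: carrier_dsum)
  ultimately show ?thesis by (simp add: carrier_dsum)
qed

lemma erase_hom: "erase j \<in> hom dsum dsum"
proof (rule homI)
  show "erase j x \<in> carrier dsum" if "x \<in> carrier dsum" for x
    using erase_closed[OF that] .
  show "erase j (x \<otimes>\<^bsub>dsum\<^esub> y) = erase j x \<otimes>\<^bsub>dsum\<^esub> erase j y" for x y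
    using monoid.l_one[OF group.is_monoid[OF group_F]] monoid.one_closed[OF group.is_monoid[OF group_F]]
    unfolding mult_sum_group erase_def by (intro restrict_ext) auto
qed

lemma complementary_projections_single_erase:
  assumes j: "j \<in> I"
  shows "complementary_projections dsum (\<lambda>x. single j (x j)) (erase j)"
  unfolding complementary_projections_def
proof (intro conjI ballI)
  show "(\<lambda>x. single j (x j)) \<in> hom dsum dsum"
    using hom_compose[OF eval_hom[OF j] single_hom[OF j]] by (simp add: comp_def)
  show "erase j \<in> hom dsum dsum" by (rule erase_hom)
  fix x assume x: "x \<in> carrier dsum"
  have "single j (x j) \<otimes>\<^bsub>dsum\<^esub> erase j x \<in> carrier dsum"
    using dsum.m_closed[OF single_closed[OF j dsum_apply_closed[OF x j]] erase_closed[OF x]] .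
  then show "single j (x j) \<otimes>\<^bsub>dsum\<^esub> erase j x = x"
    using x j group.is_monoid[OF group_F] dsum_apply_closed[OF x]
    by (intro dsum_eqI) (auto simp: single_def erase_def)
  show "single j (erase j x j) = \<one>\<^bsub>dsum\<^esub>"
    using j single_one by (simp add: erase_def)
  show "erase j (single j (x j)) = \<one>\<^bsub>dsum\<^esub>"
    by (auto simp: erase_def single_def)
qed

definition factor :: "'i \<Rightarrow> ('i \<Rightarrow> 'g) set"
  where "factor i = single i ` carrier (F i)"

lemma factor_subset_carrier: "i \<in> I \<Longrightarrow> factor i \<subseteq> carrier dsum"
  by (auto simp: factor_def single_closed)

lemma factor_eq_single: "i \<in> I \<Longrightarrow> x \<in> factor i \<Longrightarrow> x = single i (x i)"
  by (auto simp: factor_def single_apply)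

lemma mem_factorI:
  assumes "i \<in> I" "x \<in> carrier dsum" "\<And>k. k \<in> I \<Longrightarrow> k \<noteq> i \<Longrightarrow> x k = \<one>\<^bsub>F k\<^esub>"
  shows "x \<in> factor i"
proof -
  have "x = single i (x i)"
    using assms single_closed[OF assms(1) dsum_apply_closed[OF assms(2,1)]]
    by (intro dsum_eqI) (auto simp: single_apply)
  then show ?thesis
    using dsum_apply_closed[OF assms(2,1)] unfolding factor_def by blast
qed

lemma erase_eq_one_iff:
  assumes "j \<in> I" "x \<in> carrier dsum"
  shows "erase j x = \<one>\<^bsub>dsum\<^esub> \<longleftrightarrow> x \<in> factor j"
proof
  assume erase: "erase j x = \<one>\<^bsub>dsum\<^esub>"
  show "x \<in> factor j"
  proof (rule mem_factorI[OF assms])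
    fix k assume "k \<in> I" "k \<noteq> j"
    then show "x k = \<one>\<^bsub>F k\<^esub>" using fun_cong[OF erase, of k] by (simp add: erase_def)
  qed
next
  assume "x \<in> factor j"
  then obtain a where "x = single j a" by (auto simp: factor_def)
  then show "erase j x = \<one>\<^bsub>dsum\<^esub>" by (auto simp: erase_def single_def)
qed

lemma factor_subset_factor:
  assumes "i \<in> I" "k \<in> I" "carrier (F i) \<noteq> {\<one>\<^bsub>F i\<^esub>}" "factor i \<subseteq> factor k"
  shows "i = k"
proof -
  obtain a where a: "a \<in> carrier (F i)" "a \<noteq> \<one>\<^bsub>F i\<^esub>"
    using group.nontrivial_elemE[OF group_F[OF assms(1)] assms(3)] .
  then obtain b where "single i a = single k b"
    using assms(4) unfolding factor_def by blast
  then show ?thesis using single_eq_single assms(1,2) a(2) by blast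
qed

lemma factor_center_trivial:
  assumes Z: "group_center dsum = {\<one>\<^bsub>dsum\<^esub>}" and i: "i \<in> I"
  shows "group_center (F i) = {\<one>\<^bsub>F i\<^esub>}"
proof (intro equalityI subsetI)
  fix z assume z: "z \<in> group_center (F i)"
  have "single i z \<in> group_center dsum"
  proof (rule group_centerI)
    show "single i z \<in> carrier dsum" using single_closed[OF i group_centerD(1)[OF z]] .
    fix y assume y: "y \<in> carrier dsum"
    have "z \<otimes>\<^bsub>F i\<^esub> y i = y i \<otimes>\<^bsub>F i\<^esub> z"
      using group_centerD(2)[OF z dsum_apply_closed[OF y i]] .
    then show "single i z \<otimes>\<^bsub>dsum\<^esub> y = y \<otimes>\<^bsub>dsum\<^esub> single i z"
      unfolding dsum_commute_iff
      using y group.is_monoid[OF group_F] dsum_apply_closed by (simp add: single_apply)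
  qed
  then show "z \<in> {\<one>\<^bsub>F i\<^esub>}" using Z single_eq_one_iff[OF i] by simp
next
  fix z assume "z \<in> {\<one>\<^bsub>F i\<^esub>}"
  then show "z \<in> group_center (F i)"
    using group.is_monoid[OF group_F[OF i]]
    by (auto intro: group_centerI simp: monoid.l_one monoid.r_one monoid.one_closed)
qed

lemma centralizer_of_complement:
  assumes Z: "group_center dsum = {\<one>\<^bsub>dsum\<^esub>}" and i: "i \<in> I" and z: "z \<in> carrier dsum"
    and comm: "\<And>y. y \<in> carrier dsum \<Longrightarrow> y i = \<one>\<^bsub>F i\<^esub> \<Longrightarrow> z \<otimes>\<^bsub>dsum\<^esub> y = y \<otimes>\<^bsub>dsum\<^esub> z"
  shows "z \<in> factor i"
proof (rule mem_factorI[OF i z])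
  fix k assume k: "k \<in> I" "k \<noteq> i"
  have "z k \<in> group_center (F k)"
  proof (rule group_centerI)
    show "z k \<in> carrier (F k)" using dsum_apply_closed[OF z k(1)] .
    fix w assume w: "w \<in> carrier (F k)"
    have "single k w i = \<one>\<^bsub>F i\<^esub>" using i k by (simp add: single_apply)
    then have "z \<otimes>\<^bsub>dsum\<^esub> single k w = single k w \<otimes>\<^bsub>dsum\<^esub> z"
      using comm single_closed[OF k(1) w] by blast
    then have "z k \<otimes>\<^bsub>F k\<^esub> single k w k = single k w k \<otimes>\<^bsub>F k\<^esub> z k"
      using k(1) by (rule dsum_commuteD)
    then show "z k \<otimes>\<^bsub>F k\<^esub> w = w \<otimes>\<^bsub>F k\<^esub> z k"
      using k(1) by (simp add: single_apply)
  qed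
  then show "z k = \<one>\<^bsub>F k\<^esub>" using factor_center_trivial[OF Z k(1)] by simp
qed

(* A projection preserves commuting with the complement of F i, whose centralizer is F i. *)
lemma single_projection_single:
  assumes Z: "group_center dsum = {\<one>\<^bsub>dsum\<^esub>}" and i: "i \<in> I"
    and P: "complementary_projections dsum \<pi> \<kappa>" and a: "a \<in> carrier (F i)"
  shows "single i (\<pi> (single i a) i) = \<pi> (single i a)"
proof -
  have "\<pi> (single i a) \<in> factor i"
  proof (rule centralizer_of_complement[OF Z i])
    have "\<pi> \<in> hom dsum dsum" using P by (simp add: complementary_projections_def)
    then show "\<pi> (single i a) \<in> carrier dsum" using single_closed[OF i a] by (rule hom_in_carrier)
    fix y assume y: "y \<in> carrier dsum" "y i = \<one>\<^bsub>F i\<^esub>"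
    show "\<pi> (single i a) \<otimes>\<^bsub>dsum\<^esub> y = y \<otimes>\<^bsub>dsum\<^esub> \<pi> (single i a)"
      using dsum.complementary_projection_preserves_commute[OF P single_closed[OF i a] y(1)
          single_commute[OF i y(2) a y(1)]] .
  qed
  then show ?thesis by (rule factor_eq_single[OF i, symmetric])
qed

lemma complementary_projections_on_factor:
  assumes Z: "group_center dsum = {\<one>\<^bsub>dsum\<^esub>}" and i: "i \<in> I"
    and P: "complementary_projections dsum \<pi> \<kappa>"
  shows "complementary_projections (F i) (\<lambda>a. \<pi> (single i a) i) (\<lambda>a. \<kappa> (single i a) i)"
proof -
  have P': "complementary_projections dsum \<kappa> \<pi>"
    using dsum.complementary_projections_sym[OF P] .
  have hom: "\<pi> \<in> hom dsum dsum" "\<kappa> \<in> hom dsum dsum"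
    and split: "\<And>x. x \<in> carrier dsum \<Longrightarrow> \<pi> x \<otimes>\<^bsub>dsum\<^esub> \<kappa> x = x"
    and \<pi>\<kappa>: "\<And>x. x \<in> carrier dsum \<Longrightarrow> \<pi> (\<kappa> x) = \<one>\<^bsub>dsum\<^esub>"
    and \<kappa>\<pi>: "\<And>x. x \<in> carrier dsum \<Longrightarrow> \<kappa> (\<pi> x) = \<one>\<^bsub>dsum\<^esub>"
    using P by (auto simp: complementary_projections_def)
  have restrict_hom: "(\<lambda>a. \<phi> (single i a) i) \<in> hom (F i) (F i)" if "\<phi> \<in> hom dsum dsum" for \<phi>
    using hom_compose[OF hom_compose[OF single_hom[OF i] that] eval_hom[OF i]] by (simp add: comp_def)
  show ?thesis
    unfolding complementary_projections_def
  proof (intro conjI ballI)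
    show "(\<lambda>a. \<pi> (single i a) i) \<in> hom (F i) (F i)" "(\<lambda>a. \<kappa> (single i a) i) \<in> hom (F i) (F i)"
      using restrict_hom hom by auto
    fix a assume a: "a \<in> carrier (F i)"
    note s = single_closed[OF i a]
    have "(\<pi> (single i a) \<otimes>\<^bsub>dsum\<^esub> \<kappa> (single i a)) i = single i a i"
      using split[OF s] by simp
    then show "\<pi> (single i a) i \<otimes>\<^bsub>F i\<^esub> \<kappa> (single i a) i = a"
      using i by (simp add: single_apply)
    show "\<pi> (single i (\<kappa> (single i a) i)) i = \<one>\<^bsub>F i\<^esub>"
      using single_projection_single[OF Z i P' a] \<pi>\<kappa>[OF s] i by simp
    show "\<kappa> (single i (\<pi> (single i a) i)) i = \<one>\<^bsub>F i\<^esub>"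
      using single_projection_single[OF Z i P a] \<kappa>\<pi>[OF s] i by simp
  qed
qed

lemma factor_in_kernel_of_projection:
  assumes Z: "group_center dsum = {\<one>\<^bsub>dsum\<^esub>}" and i: "i \<in> I" and ind: "indecomposable_group (F i)"
    and P: "complementary_projections dsum \<pi> \<kappa>"
  shows "factor i \<subseteq> kernel dsum dsum \<pi> \<or> factor i \<subseteq> kernel dsum dsum \<kappa>"
proof -
  have "factor i \<subseteq> kernel dsum dsum \<phi>"
    if Q: "complementary_projections dsum \<phi> \<phi>'" and trivial: "\<forall>a\<in>carrier (F i). \<phi> (single i a) i = \<one>\<^bsub>F i\<^esub>"
    for \<phi> \<phi>'
  proof
    fix x assume "x \<in> factor i"
    then obtain a where a: "a \<in> carrier (F i)" "x = single i a" by (auto simp: factor_def)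
    have "\<phi> x = single i (\<phi> (single i a) i)" using single_projection_single[OF Z i Q a(1)] a(2) by simp
    also have "\<dots> = \<one>\<^bsub>dsum\<^esub>" using trivial a(1) single_one by simp
    finally show "x \<in> kernel dsum dsum \<phi>" using single_closed[OF i a(1)] a(2) by (simp add: kernel_def)
  qed
  then show ?thesis
    using indecomposable_complementary_projections[OF ind complementary_projections_on_factor[OF Z i P]]
      P dsum.complementary_projections_sym[OF P] by blast
qed

lemma nontrivial_index_inj:
  assumes "\<And>i. i \<in> I \<Longrightarrow> carrier (F i) \<noteq> {\<one>\<^bsub>F i\<^esub>}"
  obtains f where "inj_on f I" "f ` I \<subseteq> carrier dsum - {\<one>\<^bsub>dsum\<^esub>}"
proof -
  have "\<exists>a. a \<in> carrier (F i) \<and> a \<noteq> \<one>\<^bsub>F i\<^esub>" if "i \<in> I" for i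
    using assms[OF that] monoid.one_closed[OF group.is_monoid[OF group_F[OF that]]] by blast
  then obtain a where a: "\<And>i. i \<in> I \<Longrightarrow> a i \<in> carrier (F i) \<and> a i \<noteq> \<one>\<^bsub>F i\<^esub>" by metis
  show ?thesis
  proof (rule that[of "\<lambda>i. single i (a i)"])
    show "inj_on (\<lambda>i. single i (a i)) I"
      using a single_eq_single by (intro inj_onI) blast
    show "(\<lambda>i. single i (a i)) ` I \<subseteq> carrier dsum - {\<one>\<^bsub>dsum\<^esub>}"
      using a single_closed single_eq_one_iff by auto
  qed
qed

lemma finite_card_le_of_mat_embedding:
  fixes \<rho> :: "('i \<Rightarrow> 'g) \<Rightarrow> 'k::field mat"
  assumes \<rho>: "\<rho> \<in> hom dsum (GL_group d TYPE('k))" and inj: "inj_on \<rho> (carrier dsum)"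
    and nonabelian: "\<And>i. i \<in> I \<Longrightarrow> \<exists>a\<in>carrier (F i). \<exists>b\<in>carrier (F i). a \<otimes>\<^bsub>F i\<^esub> b \<noteq> b \<otimes>\<^bsub>F i\<^esub> a"
  shows "finite I \<and> card I \<le> d * d"
proof -
  obtain a b where a: "\<And>i. i \<in> I \<Longrightarrow> a i \<in> carrier (F i)" and b: "\<And>i. i \<in> I \<Longrightarrow> b i \<in> carrier (F i)"
    and ab: "\<And>i. i \<in> I \<Longrightarrow> a i \<otimes>\<^bsub>F i\<^esub> b i \<noteq> b i \<otimes>\<^bsub>F i\<^esub> a i"
    using nonabelian by metis
  have commute_iff: "\<rho> x * \<rho> y = \<rho> y * \<rho> x \<longleftrightarrow> x \<otimes>\<^bsub>dsum\<^esub> y = y \<otimes>\<^bsub>dsum\<^esub> x"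
    if "x \<in> carrier dsum" "y \<in> carrier dsum" for x y
    using inj_hom_commute_iff[OF \<rho> inj dsum.is_monoid that] by (simp add: GL_group_def)
  show ?thesis
  proof (rule cross_commuting_mats_card_le[where M = "\<lambda>i. \<rho> (single i (a i))" and N = "\<lambda>i. \<rho> (single i (b i))"])
    fix i assume i: "i \<in> I"
    note sa = single_closed[OF i a[OF i]] and sb = single_closed[OF i b[OF i]]
    show "\<rho> (single i (a i)) \<in> carrier_mat d d" "\<rho> (single i (b i)) \<in> carrier_mat d d"
      using hom_in_carrier[OF \<rho> sa] hom_in_carrier[OF \<rho> sb] by (simp_all add: GL_group_def)
    show "\<rho> (single i (a i)) * \<rho> (single i (b i)) \<noteq> \<rho> (single i (b i)) * \<rho> (single i (a i))"
    proof
      assume "\<rho> (single i (a i)) * \<rho> (single i (b i)) = \<rho> (single i (b i)) * \<rho> (single i (a i))"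
      then have "single i (a i) \<otimes>\<^bsub>dsum\<^esub> single i (b i) = single i (b i) \<otimes>\<^bsub>dsum\<^esub> single i (a i)"
        using commute_iff[OF sa sb] by simp
      then have "a i \<otimes>\<^bsub>F i\<^esub> b i = b i \<otimes>\<^bsub>F i\<^esub> a i" using i by (rule single_commuteD)
      then show False using ab[OF i] by contradiction
    qed
    fix k assume k: "k \<in> I" "i \<noteq> k"
    note sb' = single_closed[OF k(1) b[OF k(1)]]
    have "single i (a i) \<otimes>\<^bsub>dsum\<^esub> single k (b k) = single k (b k) \<otimes>\<^bsub>dsum\<^esub> single i (a i)"
      using single_commute[OF i _ a[OF i] sb'] i k by (simp add: single_apply)
    then show "\<rho> (single i (a i)) * \<rho> (single k (b k)) = \<rho> (single k (b k)) * \<rho> (single i (a i))"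
      using commute_iff[OF sa sb'] by simp
  qed
qed

lemma group_family_split:
  assumes "i \<in> I" "group A" "group B"
  shows "group_family (insert b I) (F(i := A, b := B))"
  using assms by (intro group_family.intro) (auto simp: group_F)

definition split_factor :: "'i \<Rightarrow> 'i \<Rightarrow> ('g \<Rightarrow> 'g \<times> 'g) \<Rightarrow> ('i \<Rightarrow> 'g) \<Rightarrow> 'i \<Rightarrow> 'g"
  where "split_factor i b \<alpha> x =
    (\<lambda>k\<in>insert b I. if k = i then fst (\<alpha> (x i)) else if k = b then snd (\<alpha> (x i)) else x k)"

definition merge_factors :: "'i \<Rightarrow> 'i \<Rightarrow> ('g \<times> 'g \<Rightarrow> 'g) \<Rightarrow> ('i \<Rightarrow> 'g) \<Rightarrow> 'i \<Rightarrow> 'g"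
  where "merge_factors i b \<beta> z = (\<lambda>k\<in>I. if k = i then \<beta> (z i, z b) else z k)"

lemma split_factor_closed:
  assumes i: "i \<in> I" and b: "b \<notin> I" and A: "group A" and B: "group B"
    and \<alpha>: "\<alpha> \<in> hom (F i) (A \<times>\<times> B)" and x: "x \<in> carrier dsum"
  shows "split_factor i b \<alpha> x \<in> carrier (sum_group (insert b I) (F(i := A, b := B)))"
proof -
  interpret T: group_family "insert b I" "F(i := A, b := B)" by (rule group_family_split[OF i A B])
  have "\<alpha> (x i) \<in> carrier A \<times> carrier B"
    using hom_in_carrier[OF \<alpha> dsum_apply_closed[OF x i]] by simp
  then have "split_factor i b \<alpha> x \<in> (\<Pi>\<^sub>E k\<in>insert b I. carrier ((F(i := A, b := B)) k))"
    unfolding split_factor_def restrict_PiE_iff using dsum_apply_closed[OF x] i b by auto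
  moreover have "{k \<in> insert b I. split_factor i b \<alpha> x k \<noteq> \<one>\<^bsub>(F(i := A, b := B)) k\<^esub>}
      \<subseteq> insert i (insert b {k \<in> I. x k \<noteq> \<one>\<^bsub>F k\<^esub>})"
    by (auto simp: split_factor_def)
  then have "finite {k \<in> insert b I. split_factor i b \<alpha> x k \<noteq> \<one>\<^bsub>(F(i := A, b := B)) k\<^esub>}"
    by (rule finite_subset) (use x in \<open>simp add: carrier_dsum\<close>)
  ultimately show ?thesis by (simp add: T.carrier_dsum)
qed

lemma merge_factors_closed:
  assumes i: "i \<in> I" and b: "b \<notin> I" and A: "group A" and B: "group B"
    and \<beta>: "\<beta> \<in> hom (A \<times>\<times> B) (F i)" and z: "z \<in> carrier (sum_group (insert b I) (F(i := A, b := B)))"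
  shows "merge_factors i b \<beta> z \<in> carrier dsum"
proof -
  interpret T: group_family "insert b I" "F(i := A, b := B)" by (rule group_family_split[OF i A B])
  have "b \<noteq> i" using b i by blast
  then have "(z i, z b) \<in> carrier A \<times> carrier B"
    using T.dsum_apply_closed[OF z, of i] T.dsum_apply_closed[OF z, of b] i by simp
  moreover have "z k \<in> carrier (F k)" if "k \<in> I" "k \<noteq> i" for k
  proof -
    have "k \<noteq> b" using that(1) b by blast
    then show ?thesis using T.dsum_apply_closed[OF z, of k] that by simp
  qed
  ultimately have "merge_factors i b \<beta> z \<in> (\<Pi>\<^sub>E k\<in>I. carrier (F k))"
    unfolding merge_factors_def restrict_PiE_iff using hom_in_carrier[OF \<beta>] by auto
  moreover have "{k \<in> I. merge_factors i b \<beta> z k \<noteq> \<one>\<^bsub>F k\<^esub>}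
      \<subseteq> insert i {k \<in> insert b I. z k \<noteq> \<one>\<^bsub>(F(i := A, b := B)) k\<^esub>}"
    using b by (auto simp: merge_factors_def)
  then have "finite {k \<in> I. merge_factors i b \<beta> z k \<noteq> \<one>\<^bsub>F k\<^esub>}"
    by (rule finite_subset) (use z in \<open>simp add: T.carrier_dsum\<close>)
  ultimately show ?thesis by (simp add: carrier_dsum)
qed

lemma split_factor_hom:
  assumes i: "i \<in> I" and b: "b \<notin> I" and A: "group A" and B: "group B"
    and \<alpha>: "\<alpha> \<in> hom (F i) (A \<times>\<times> B)"
  shows "split_factor i b \<alpha> \<in> hom dsum (sum_group (insert b I) (F(i := A, b := B)))"
proof (rule homI)
  show "split_factor i b \<alpha> x \<in> carrier (sum_group (insert b I) (F(i := A, b := B)))"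
    if "x \<in> carrier dsum" for x
    using split_factor_closed[OF i b A B \<alpha> that] .
  fix x y assume x: "x \<in> carrier dsum" and y: "y \<in> carrier dsum"
  have "\<alpha> (x i \<otimes>\<^bsub>F i\<^esub> y i) = (fst (\<alpha> (x i)) \<otimes>\<^bsub>A\<^esub> fst (\<alpha> (y i)), snd (\<alpha> (x i)) \<otimes>\<^bsub>B\<^esub> snd (\<alpha> (y i)))"
    using hom_mult[OF \<alpha> dsum_apply_closed[OF x i] dsum_apply_closed[OF y i]] by (simp add: mult_DirProd')
  then show "split_factor i b \<alpha> (x \<otimes>\<^bsub>dsum\<^esub> y)
      = split_factor i b \<alpha> x \<otimes>\<^bsub>sum_group (insert b I) (F(i := A, b := B))\<^esub> split_factor i b \<alpha> y"
    unfolding split_factor_def mult_sum_group using i b by (intro restrict_ext) auto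
qed

lemma split_factor_iso:
  fixes A B :: "'g monoid"
  assumes i: "i \<in> I" and b: "b \<notin> I" and A: "group A" and B: "group B" and split: "F i \<cong> A \<times>\<times> B"
  shows "dsum \<cong> sum_group (insert b I) (F(i := A, b := B))"
proof -
  interpret T: group_family "insert b I" "F(i := A, b := B)" by (rule group_family_split[OF i A B])
  have bi: "b \<noteq> i" using b i by blast
  obtain \<alpha> \<beta> where "group_isomorphisms (F i) (A \<times>\<times> B) \<alpha> \<beta>"
    using group_isomorphisms_of_is_iso[OF group_F[OF i] split] .
  then have \<alpha>: "\<alpha> \<in> hom (F i) (A \<times>\<times> B)" and \<beta>: "\<beta> \<in> hom (A \<times>\<times> B) (F i)"
    and \<beta>\<alpha>: "\<And>x. x \<in> carrier (F i) \<Longrightarrow> \<beta> (\<alpha> x) = x"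
    and \<alpha>\<beta>: "\<And>p. p \<in> carrier A \<times> carrier B \<Longrightarrow> \<alpha> (\<beta> p) = p"
    by (auto simp: group_isomorphisms_def)
  note split_closed = split_factor_closed[OF i b A B \<alpha>]
    and merge_closed = merge_factors_closed[OF i b A B \<beta>]
  have "split_factor i b \<alpha> \<in> hom dsum T.dsum"
    by (rule split_factor_hom[OF i b A B \<alpha>])
  moreover have "bij_betw (split_factor i b \<alpha>) (carrier dsum) (carrier T.dsum)"
  proof (rule bij_betw_byWitness[where f' = "merge_factors i b \<beta>"])
    show "\<forall>x\<in>carrier dsum. merge_factors i b \<beta> (split_factor i b \<alpha> x) = x"
    proof
      fix x assume x: "x \<in> carrier dsum"
      show "merge_factors i b \<beta> (split_factor i b \<alpha> x) = x"
        using \<beta>\<alpha>[OF dsum_apply_closed[OF x i]] bi b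
        by (intro dsum_eqI[OF merge_closed[OF split_closed[OF x]] x])
          (auto simp: merge_factors_def split_factor_def)
    qed
    show "\<forall>z\<in>carrier T.dsum. split_factor i b \<alpha> (merge_factors i b \<beta> z) = z"
    proof
      fix z assume z: "z \<in> carrier T.dsum"
      have "(z i, z b) \<in> carrier A \<times> carrier B"
        using T.dsum_apply_closed[OF z, of i] T.dsum_apply_closed[OF z, of b] i bi by simp
      then show "split_factor i b \<alpha> (merge_factors i b \<beta> z) = z"
        using \<alpha>\<beta> i bi
        by (intro T.dsum_eqI[OF split_closed[OF merge_closed[OF z]] z])
          (auto simp: merge_factors_def split_factor_def)
    qed
  qed (use split_closed merge_closed in blast)+
  ultimately show ?thesis by (blast intro: is_isoI isoI)
qed

end

lemma sum_group_singleton_iso: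
  fixes G :: "('a, 'b) monoid_scheme"
  assumes G: "group G"
  shows "G \<cong> sum_group {c} (\<lambda>_. monoid.truncate G)"
proof -
  interpret S: group_family "{c}" "\<lambda>_. monoid.truncate G"
    by (rule group_family.intro) (rule group_truncate[OF G])
  have "group_isomorphisms G S.dsum (\<lambda>x. \<lambda>k\<in>{c}. x) (\<lambda>y. y c)"
    unfolding group_isomorphisms_def
  proof (intro conjI ballI)
    show "(\<lambda>x. \<lambda>k\<in>{c}. x) \<in> hom G S.dsum"
    proof (rule homI)
      show "(\<lambda>k\<in>{c}. x) \<in> carrier S.dsum" if "x \<in> carrier G" for x
        using that by (simp add: S.carrier_dsum)
      show "(\<lambda>k\<in>{c}. x \<otimes>\<^bsub>G\<^esub> y) = (\<lambda>k\<in>{c}. x) \<otimes>\<^bsub>S.dsum\<^esub> (\<lambda>k\<in>{c}. y)" for x y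
        unfolding mult_sum_group by (intro restrict_ext) simp
    qed
    show "(\<lambda>y. y c) \<in> hom S.dsum G"
      using S.eval_hom[of c] by (simp add: hom_def)
    show "(\<lambda>k\<in>{c}. x) c = x" for x
      by simp
    show "(\<lambda>k\<in>{c}. y c) = y" if "y \<in> carrier S.dsum" for y
      using that by (intro ext) (auto simp: S.carrier_dsum PiE_def extensional_def)
  qed
  then show ?thesis by (rule is_isoI[OF group_isomorphisms_imp_iso])
qed

section \<open>Uniqueness of decompositions into indecomposables\<close>

lemma sum_group_iso_factor_into_factor:
  fixes F :: "'i \<Rightarrow> 'g monoid" and F' :: "'j \<Rightarrow> 'h monoid"
  assumes A: "group_family I F" and B: "group_family J F'"
    and \<psi>: "group_isomorphisms (sum_group I F) (sum_group J F') \<psi> \<psi>'"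
    and Z: "group_center (sum_group I F) = {\<one>\<^bsub>sum_group I F\<^esub>}"
    and i: "i \<in> I" and ind: "indecomposable_group (F i)" and j: "j \<in> J"
    and a: "a \<in> carrier (F i)" and aj: "\<psi> (group_family.single I F i a) j \<noteq> \<one>\<^bsub>F' j\<^esub>"
  shows "\<psi> ` group_family.factor I F i \<subseteq> group_family.factor J F' j"
proof -
  interpret A: group_family I F by (rule A)
  interpret B: group_family J F' by (rule B)
  have \<psi>_hom: "\<psi> \<in> hom A.dsum B.dsum"
    using \<psi> by (simp add: group_isomorphisms_def)
  have \<psi>'_one_iff: "\<psi>' y = \<one>\<^bsub>A.dsum\<^esub> \<longleftrightarrow> y = \<one>\<^bsub>B.dsum\<^esub>" if "y \<in> carrier B.dsum" for y
    using group_isomorphisms_eq_one_iff[OF B.dsum.is_group A.dsum.is_group group_isomorphisms_sym[OF \<psi>] that] .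
  define \<pi> where "\<pi> = \<psi>' \<circ> (\<lambda>y. B.single j (y j)) \<circ> \<psi>"
  define \<kappa> where "\<kappa> = \<psi>' \<circ> B.erase j \<circ> \<psi>"
  have "complementary_projections A.dsum \<pi> \<kappa>"
    unfolding \<pi>_def \<kappa>_def
    by (rule complementary_projections_transfer[OF A.dsum.is_group B.dsum.is_group \<psi>
          B.complementary_projections_single_erase[OF j]])
  moreover have "\<pi> (A.single i a) \<noteq> \<one>\<^bsub>A.dsum\<^esub>"
  proof -
    have q: "\<psi> (A.single i a) \<in> carrier B.dsum" using hom_in_carrier[OF \<psi>_hom A.single_closed[OF i a]] .
    show ?thesis
      using \<psi>'_one_iff[OF B.single_closed[OF j B.dsum_apply_closed[OF q j]]] B.single_eq_one_iff[OF j] aj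
      by (simp add: \<pi>_def)
  qed
  then have "\<not> A.factor i \<subseteq> kernel A.dsum A.dsum \<pi>"
    using a by (auto simp: A.factor_def kernel_def)
  ultimately have kernel: "A.factor i \<subseteq> kernel A.dsum A.dsum \<kappa>"
    using A.factor_in_kernel_of_projection[OF Z i ind] by blast
  show ?thesis
  proof
    fix y assume "y \<in> \<psi> ` A.factor i"
    then obtain x where x: "x \<in> A.factor i" and y: "y = \<psi> x" by blast
    have \<psi>x: "\<psi> x \<in> carrier B.dsum"
      using hom_in_carrier[OF \<psi>_hom] x A.factor_subset_carrier[OF i] by blast
    have "\<psi>' (B.erase j (\<psi> x)) = \<one>\<^bsub>A.dsum\<^esub>" using kernel x by (auto simp: kernel_def \<kappa>_def)
    then show "y \<in> B.factor j"
      using \<psi>'_one_iff[OF hom_in_carrier[OF B.erase_hom \<psi>x]] B.erase_eq_one_iff[OF j \<psi>x] y by simp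
  qed
qed

lemma sum_group_iso_factor_into_some_factor:
  fixes F :: "'i \<Rightarrow> 'g monoid" and F' :: "'j \<Rightarrow> 'h monoid"
  assumes A: "group_family I F" and B: "group_family J F'"
    and \<psi>: "group_isomorphisms (sum_group I F) (sum_group J F') \<psi> \<psi>'"
    and Z: "group_center (sum_group I F) = {\<one>\<^bsub>sum_group I F\<^esub>}"
    and i: "i \<in> I" and ind: "indecomposable_group (F i)"
  shows "\<exists>j\<in>J. \<psi> ` group_family.factor I F i \<subseteq> group_family.factor J F' j"
proof -
  interpret A: group_family I F by (rule A)
  interpret B: group_family J F' by (rule B)
  obtain a where a: "a \<in> carrier (F i)" "a \<noteq> \<one>\<^bsub>F i\<^esub>"
    using group.nontrivial_elemE[OF indecomposable_groupD[OF ind]] .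
  have "\<psi> (A.single i a) \<in> carrier B.dsum"
    using \<psi> A.single_closed[OF i a(1)] hom_in_carrier by (fastforce simp: group_isomorphisms_def)
  moreover have "\<psi> (A.single i a) \<noteq> \<one>\<^bsub>B.dsum\<^esub>"
    using group_isomorphisms_eq_one_iff[OF A.dsum.is_group B.dsum.is_group \<psi> A.single_closed[OF i a(1)]]
      A.single_eq_one_iff[OF i] a(2) by simp
  ultimately obtain j where "j \<in> J" "\<psi> (A.single i a) j \<noteq> \<one>\<^bsub>F' j\<^esub>"
    using B.dsum_eq_one_iff by blast
  then show ?thesis
    using sum_group_iso_factor_into_factor[OF A B \<psi> Z i ind _ a(1)] by blast
qed

lemma sum_group_iso_factor_image:
  fixes F :: "'i \<Rightarrow> 'g monoid" and F' :: "'j \<Rightarrow> 'h monoid"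
  assumes ind: "\<And>i. i \<in> I \<Longrightarrow> indecomposable_group (F i)" and ind': "\<And>j. j \<in> J \<Longrightarrow> indecomposable_group (F' j)"
    and \<psi>: "group_isomorphisms (sum_group I F) (sum_group J F') \<psi> \<psi>'"
    and Z: "group_center (sum_group I F) = {\<one>\<^bsub>sum_group I F\<^esub>}" and i: "i \<in> I"
  shows "\<exists>j\<in>J. \<psi> ` group_family.factor I F i = group_family.factor J F' j"
proof -
  interpret A: group_family I F using indecomposable_groupD(1)[OF ind] by (rule group_family.intro)
  interpret B: group_family J F' using indecomposable_groupD(1)[OF ind'] by (rule group_family.intro)
  have \<psi>': "group_isomorphisms B.dsum A.dsum \<psi>' \<psi>" using group_isomorphisms_sym[OF \<psi>] .
  have Z': "group_center B.dsum = {\<one>\<^bsub>B.dsum\<^esub>}"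
    using group_center_trivial_iso[OF A.dsum.is_group B.dsum.is_group _ Z] group_isomorphisms_imp_iso[OF \<psi>]
    by (auto simp: is_iso_def)
  obtain j where j: "j \<in> J" "\<psi> ` A.factor i \<subseteq> B.factor j"
    using sum_group_iso_factor_into_some_factor[OF A.group_family_axioms B.group_family_axioms \<psi> Z i ind[OF i]]
    by blast
  obtain k where k: "k \<in> I" "\<psi>' ` B.factor j \<subseteq> A.factor k"
    using sum_group_iso_factor_into_some_factor[OF B.group_family_axioms A.group_family_axioms \<psi>' Z' j(1)
        ind'[OF j(1)]]
    by blast
  have "A.factor i = \<psi>' ` \<psi> ` A.factor i"
    using group_isomorphisms_image_image[OF \<psi> A.factor_subset_carrier[OF i]] by simp
  also have "\<dots> \<subseteq> A.factor k" using j(2) k(2) by blast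
  finally have "i = k"
    using A.factor_subset_factor[OF i k(1) indecomposable_groupD(2)[OF ind[OF i]]] by simp
  have "B.factor j = \<psi> ` \<psi>' ` B.factor j"
    using group_isomorphisms_image_image[OF \<psi>' B.factor_subset_carrier[OF j(1)]] by simp
  also have "\<dots> \<subseteq> \<psi> ` A.factor i" using k(2) \<open>i = k\<close> by blast
  finally show ?thesis using j by blast
qed

lemma single_image_factor:
  fixes F :: "'i \<Rightarrow> 'g monoid" and F' :: "'j \<Rightarrow> 'h monoid"
  assumes A: "group_family I F" and B: "group_family J F'"
    and image: "\<psi> ` group_family.factor I F i = group_family.factor J F' j"
    and i: "i \<in> I" and j: "j \<in> J" and a: "a \<in> carrier (F i)"
  shows "group_family.single J F' j (\<psi> (group_family.single I F i a) j) = \<psi> (group_family.single I F i a)"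
proof -
  interpret A: group_family I F by (rule A)
  interpret B: group_family J F' by (rule B)
  have "\<psi> (A.single i a) \<in> B.factor j"
    unfolding image[symmetric] A.factor_def using a by blast
  then show ?thesis by (rule B.factor_eq_single[OF j, symmetric])
qed

lemma sum_group_iso_factor_iso:
  fixes F :: "'i \<Rightarrow> 'g monoid" and F' :: "'j \<Rightarrow> 'h monoid"
  assumes A: "group_family I F" and B: "group_family J F'"
    and \<psi>: "group_isomorphisms (sum_group I F) (sum_group J F') \<psi> \<psi>'"
    and i: "i \<in> I" and j: "j \<in> J" and image: "\<psi> ` group_family.factor I F i = group_family.factor J F' j"
  shows "F i \<cong> F' j"
proof -
  interpret A: group_family I F by (rule A)
  interpret B: group_family J F' by (rule B)
  have \<psi>_hom: "\<psi> \<in> hom A.dsum B.dsum" "\<psi>' \<in> hom B.dsum A.dsum"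
    and \<psi>'\<psi>: "\<And>x. x \<in> carrier A.dsum \<Longrightarrow> \<psi>' (\<psi> x) = x"
    and \<psi>\<psi>': "\<And>y. y \<in> carrier B.dsum \<Longrightarrow> \<psi> (\<psi>' y) = y"
    using \<psi> by (auto simp: group_isomorphisms_def)
  have image': "\<psi>' ` B.factor j = A.factor i"
    using group_isomorphisms_image_image[OF \<psi> A.factor_subset_carrier[OF i]] image by simp
  let ?f = "\<lambda>a. \<psi> (A.single i a) j" and ?g = "\<lambda>c. \<psi>' (B.single j c) i"
  have "group_isomorphisms (F i) (F' j) ?f ?g"
    unfolding group_isomorphisms_def
  proof (intro conjI ballI)
    show "?f \<in> hom (F i) (F' j)"
      using hom_compose[OF hom_compose[OF A.single_hom[OF i] \<psi>_hom(1)] B.eval_hom[OF j]] by (simp add: comp_def)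
    show "?g \<in> hom (F' j) (F i)"
      using hom_compose[OF hom_compose[OF B.single_hom[OF j] \<psi>_hom(2)] A.eval_hom[OF i]] by (simp add: comp_def)
    fix a assume a: "a \<in> carrier (F i)"
    show "?g (?f a) = a"
      using single_image_factor[OF A B image i j a] \<psi>'\<psi>[OF A.single_closed[OF i a]] i by (simp add: A.single_apply)
  next
    fix c assume c: "c \<in> carrier (F' j)"
    show "?f (?g c) = c"
      using single_image_factor[OF B A image' j i c] \<psi>\<psi>'[OF B.single_closed[OF j c]] j by (simp add: B.single_apply)
  qed
  then show ?thesis by (rule is_isoI[OF group_isomorphisms_imp_iso])
qed

theorem sum_group_indecomposable_unique:
  fixes F :: "'i \<Rightarrow> 'g monoid" and F' :: "'j \<Rightarrow> 'h monoid"
  assumes ind: "\<And>i. i \<in> I \<Longrightarrow> indecomposable_group (F i)" and ind': "\<And>j. j \<in> J \<Longrightarrow> indecomposable_group (F' j)"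
    and iso: "sum_group I F \<cong> sum_group J F'"
    and Z: "group_center (sum_group I F) = {\<one>\<^bsub>sum_group I F\<^esub>}"
  shows "\<exists>\<sigma>. bij_betw \<sigma> I J \<and> (\<forall>i\<in>I. F i \<cong> F' (\<sigma> i))"
proof -
  interpret A: group_family I F using indecomposable_groupD(1)[OF ind] by (rule group_family.intro)
  interpret B: group_family J F' using indecomposable_groupD(1)[OF ind'] by (rule group_family.intro)
  obtain \<psi> \<psi>' where \<psi>: "group_isomorphisms A.dsum B.dsum \<psi> \<psi>'"
    using group_isomorphisms_of_is_iso[OF A.dsum.is_group iso] .
  have \<psi>': "group_isomorphisms B.dsum A.dsum \<psi>' \<psi>" using group_isomorphisms_sym[OF \<psi>] .
  have Z': "group_center B.dsum = {\<one>\<^bsub>B.dsum\<^esub>}"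
    using group_center_trivial_iso[OF A.dsum.is_group B.dsum.is_group iso Z] .
  have "\<forall>i\<in>I. \<exists>j. j \<in> J \<and> \<psi> ` A.factor i = B.factor j"
    using sum_group_iso_factor_image[OF ind ind' \<psi> Z] by blast
  then obtain \<sigma> where \<sigma>: "\<And>i. i \<in> I \<Longrightarrow> \<sigma> i \<in> J" "\<And>i. i \<in> I \<Longrightarrow> \<psi> ` A.factor i = B.factor (\<sigma> i)"
    by (metis bchoice)
  have "inj_on \<psi> (carrier A.dsum)"
    using group_isomorphisms_imp_iso[OF \<psi>] by (simp add: iso_def bij_betw_def)
  then have "inj_on \<sigma> I"
    using \<sigma>(2) A.factor_subset_factor indecomposable_groupD(2)[OF ind] A.factor_subset_carrier
    by (intro inj_onI) (metis inj_on_image_eq_iff order_refl)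
  moreover have "J \<subseteq> \<sigma> ` I"
  proof
    fix j assume j: "j \<in> J"
    obtain k where k: "k \<in> I" "\<psi>' ` B.factor j = A.factor k"
      using sum_group_iso_factor_image[OF ind' ind \<psi>' Z' j] by blast
    have "B.factor j = B.factor (\<sigma> k)"
      using group_isomorphisms_image_image[OF \<psi>' B.factor_subset_carrier[OF j]] k(2) \<sigma>(2)[OF k(1)] by simp
    then have "j = \<sigma> k"
      using B.factor_subset_factor[OF j \<sigma>(1)[OF k(1)] indecomposable_groupD(2)[OF ind'[OF j]]] by simp
    then show "j \<in> \<sigma> ` I" using k(1) by blast
  qed
  ultimately have "bij_betw \<sigma> I J" using \<sigma>(1) by (auto simp: bij_betw_def)
  moreover have "F i \<cong> F' (\<sigma> i)" if "i \<in> I" for i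
    using sum_group_iso_factor_iso[OF A.group_family_axioms B.group_family_axioms \<psi> that \<sigma>(1,2)[OF that]] .
  ultimately show ?thesis by blast
qed

section \<open>Existence of decompositions into indecomposables\<close>

definition nontrivial_decomposition :: "('a, 'b) monoid_scheme \<Rightarrow> 'i set \<Rightarrow> ('i \<Rightarrow> 'g monoid) \<Rightarrow> bool"
  where "nontrivial_decomposition G I F \<longleftrightarrow>
    (\<forall>i\<in>I. group (F i) \<and> carrier (F i) \<noteq> {\<one>\<^bsub>F i\<^esub>}) \<and> G \<cong> sum_group I F"

lemma nontrivial_decomposition_group_family:
  "nontrivial_decomposition G I F \<Longrightarrow> group_family I F"
  by (rule group_family.intro) (simp add: nontrivial_decomposition_def)

lemma linear_nontrivial_decomposition_card_le:
  fixes G :: "('a, 'b) monoid_scheme" and \<phi> :: "'a \<Rightarrow> 'k::field mat" and F :: "'i \<Rightarrow> 'g monoid"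
  assumes G: "group G" and \<phi>: "\<phi> \<in> hom G (GL_group d TYPE('k))" and inj: "inj_on \<phi> (carrier G)"
    and Z: "group_center G = {\<one>\<^bsub>G\<^esub>}" and dec: "nontrivial_decomposition G I F"
  shows "finite I \<and> card I \<le> d * d"
proof -
  interpret group_family I F using dec by (rule nontrivial_decomposition_group_family)
  have iso: "G \<cong> dsum" and nontrivial: "\<And>i. i \<in> I \<Longrightarrow> carrier (F i) \<noteq> {\<one>\<^bsub>F i\<^esub>}"
    using dec by (auto simp: nontrivial_decomposition_def)
  obtain \<psi> \<psi>' where "group_isomorphisms G dsum \<psi> \<psi>'"
    using group_isomorphisms_of_is_iso[OF G iso] .
  then have "\<psi>' \<in> iso dsum G" by (rule group_isomorphisms_imp_iso[OF group_isomorphisms_sym])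
  then have \<psi>': "\<psi>' \<in> hom dsum G" "inj_on \<psi>' (carrier dsum)" "\<psi>' ` carrier dsum = carrier G"
    by (auto simp: iso_def bij_betw_def)
  have Z': "group_center dsum = {\<one>\<^bsub>dsum\<^esub>}"
    using group_center_trivial_iso[OF G dsum.is_group iso Z] .
  show ?thesis
  proof (rule finite_card_le_of_mat_embedding)
    show "\<phi> \<circ> \<psi>' \<in> hom dsum (GL_group d TYPE('k))" using hom_compose[OF \<psi>'(1) \<phi>] .
    show "inj_on (\<phi> \<circ> \<psi>') (carrier dsum)" using comp_inj_on[OF \<psi>'(2)] inj \<psi>'(3) by simp
    fix i assume i: "i \<in> I"
    obtain a where a: "a \<in> carrier (F i)" "a \<noteq> \<one>\<^bsub>F i\<^esub>"
      using group.nontrivial_elemE[OF group_F[OF i] nontrivial[OF i]] .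
    then have "a \<notin> group_center (F i)" using factor_center_trivial[OF Z' i] by simp
    then obtain b where "b \<in> carrier (F i)" "a \<otimes>\<^bsub>F i\<^esub> b \<noteq> b \<otimes>\<^bsub>F i\<^esub> a"
      by (rule not_in_group_centerE[OF a(1)])
    then show "\<exists>a\<in>carrier (F i). \<exists>b\<in>carrier (F i). a \<otimes>\<^bsub>F i\<^esub> b \<noteq> b \<otimes>\<^bsub>F i\<^esub> a"
      using a(1) by blast
  qed
qed

(* Indices live in the carrier type 'a, so splitting a factor needs an index outside I. *)
lemma nontrivial_decomposition_fresh_index:
  fixes G :: "('a, 'b) monoid_scheme" and I :: "'a set"
  assumes G: "group G" and dec: "nontrivial_decomposition G I F" and fin: "finite I"
  obtains b where "b \<notin> I"
proof -
  interpret group_family I F using dec by (rule nontrivial_decomposition_group_family)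
  have iso: "G \<cong> dsum" and nontrivial: "\<And>i. i \<in> I \<Longrightarrow> carrier (F i) \<noteq> {\<one>\<^bsub>F i\<^esub>}"
    using dec by (auto simp: nontrivial_decomposition_def)
  obtain f where f: "inj_on f I" "f ` I \<subseteq> carrier dsum - {\<one>\<^bsub>dsum\<^esub>}"
    using nontrivial_index_inj nontrivial by blast
  obtain \<psi> \<psi>' where \<psi>: "group_isomorphisms G dsum \<psi> \<psi>'"
    using group_isomorphisms_of_is_iso[OF G iso] .
  then have "\<psi>' \<in> iso dsum G" by (rule group_isomorphisms_imp_iso[OF group_isomorphisms_sym])
  then have "inj_on \<psi>' (carrier dsum)" by (auto simp: iso_def bij_betw_def)
  then have "inj_on (\<psi>' \<circ> f) I" using f by (blast intro: comp_inj_on inj_on_subset)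
  moreover have "(\<psi>' \<circ> f) ` I \<subseteq> UNIV - {\<one>\<^bsub>G\<^esub>}"
    using f group_isomorphisms_eq_one_iff[OF dsum.is_group G group_isomorphisms_sym[OF \<psi>]] by auto
  ultimately have "I \<noteq> UNIV"
    using fin card_inj_on_le[of "\<psi>' \<circ> f" I "UNIV - {\<one>\<^bsub>G\<^esub>}"] card_Diff1_less[of UNIV "\<one>\<^bsub>G\<^esub>"]
    by fastforce
  then show ?thesis using that by blast
qed

lemma ex_nontrivial_decomposition:
  fixes G :: "('a, 'b) monoid_scheme"
  assumes G: "group G"
  obtains I and F :: "'a \<Rightarrow> 'a monoid" where "nontrivial_decomposition G I F"
proof (cases "carrier G = {\<one>\<^bsub>G\<^esub>}")
  case True
  interpret E: group_family "{} :: 'a set" "\<lambda>_. monoid.truncate G"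
    by (rule group_family.intro) simp
  have "G \<cong> E.dsum"
    by (rule trivial_groups_iso[OF G E.dsum.is_group True]) (simp add: E.carrier_dsum PiE_empty_domain restrict_def)
  then show ?thesis by (intro that[of "{}" "\<lambda>_. monoid.truncate G"]) (simp add: nontrivial_decomposition_def)
next
  case False
  have "nontrivial_decomposition G {undefined} (\<lambda>_. monoid.truncate G)"
    using group_truncate[OF G] sum_group_singleton_iso[OF G] False by (simp add: nontrivial_decomposition_def)
  then show ?thesis by (rule that)
qed

lemma nontrivial_decomposition_refine:
  fixes G :: "('a, 'b) monoid_scheme" and F :: "'a \<Rightarrow> 'a monoid"
  assumes G: "group G" and dec: "nontrivial_decomposition G I F" and fin: "finite I"
    and i: "i \<in> I" and decomposable: "\<not> indecomposable_group (F i)"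
  obtains I' and F' :: "'a \<Rightarrow> 'a monoid"
  where "nontrivial_decomposition G I' F'" "card I' = Suc (card I)"
proof -
  interpret group_family I F using dec by (rule nontrivial_decomposition_group_family)
  have iso: "G \<cong> dsum" and nontrivial: "\<And>k. k \<in> I \<Longrightarrow> carrier (F k) \<noteq> {\<one>\<^bsub>F k\<^esub>}"
    using dec by (auto simp: nontrivial_decomposition_def)
  obtain A B :: "'a monoid" where AB: "group A" "group B" "F i \<cong> A \<times>\<times> B"
    "carrier A \<noteq> {\<one>\<^bsub>A\<^esub>}" "carrier B \<noteq> {\<one>\<^bsub>B\<^esub>}"
    using decomposable group_F[OF i] nontrivial[OF i] unfolding indecomposable_group_def by auto
  obtain b where b: "b \<notin> I" using nontrivial_decomposition_fresh_index[OF G dec fin] .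
  have "G \<cong> sum_group (insert b I) (F(i := A, b := B))"
    using iso_trans[OF iso split_factor_iso[OF i b AB(1-3)]] .
  moreover have "\<forall>k\<in>insert b I. group ((F(i := A, b := B)) k) \<and>
      carrier ((F(i := A, b := B)) k) \<noteq> {\<one>\<^bsub>(F(i := A, b := B)) k\<^esub>}"
    using AB group_F nontrivial by auto
  ultimately have "nontrivial_decomposition G (insert b I) (F(i := A, b := B))"
    by (simp add: nontrivial_decomposition_def)
  then show ?thesis using that fin b by simp
qed

lemma ex_direct_decomposition:
  fixes G :: "('a, 'b) monoid_scheme"
  assumes G: "group G"
    and bounded: "\<And>I (F :: 'a \<Rightarrow> 'a monoid). nontrivial_decomposition G I F \<Longrightarrow> finite I \<and> card I \<le> N"
  shows "\<exists>I F. direct_decomposition G I F"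
proof -
  define \<D> where "\<D> = {I. \<exists>F :: 'a \<Rightarrow> 'a monoid. nontrivial_decomposition G I F}"
  have "finite (card ` \<D>)"
    using bounded by (intro finite_subset[of "card ` \<D>" "{..N}"]) (auto simp: \<D>_def)
  moreover have "card ` \<D> \<noteq> {}"
    using ex_nontrivial_decomposition[OF G] unfolding \<D>_def by blast
  ultimately have "Max (card ` \<D>) \<in> card ` \<D>" by (rule Max_in)
  then obtain I where max: "Max (card ` \<D>) = card I" and "I \<in> \<D>" by (rule imageE)
  then obtain F :: "'a \<Rightarrow> 'a monoid" where dec: "nontrivial_decomposition G I F"
    unfolding \<D>_def by blast
  have "indecomposable_group (F i)" if i: "i \<in> I" for i
  proof (rule ccontr)
    assume "\<not> indecomposable_group (F i)"
    then obtain I' and F' :: "'a \<Rightarrow> 'a monoid"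
      where "nontrivial_decomposition G I' F'" "card I' = Suc (card I)"
      using nontrivial_decomposition_refine[OF G dec conjunct1[OF bounded[OF dec]] i] by blast
    then have "Suc (card I) \<in> card ` \<D>" unfolding \<D>_def by (intro image_eqI[of _ card I']) auto
    then show False using Max_ge[OF \<open>finite (card ` \<D>)\<close>] max by fastforce
  qed
  then show ?thesis using dec unfolding direct_decomposition_def nontrivial_decomposition_def by blast
qed

lemma direct_decomposition_unique:
  fixes G :: "('a, 'b) monoid_scheme"
  assumes G: "group G" and Z: "group_center G = {\<one>\<^bsub>G\<^esub>}"
    and dec: "direct_decomposition G I F" and dec': "direct_decomposition G J F'"
  shows "\<exists>\<sigma>. bij_betw \<sigma> I J \<and> (\<forall>i\<in>I. F i \<cong> F' (\<sigma> i))"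
proof (rule sum_group_indecomposable_unique)
  show ind: "indecomposable_group (F i)" if "i \<in> I" for i
    using dec that unfolding direct_decomposition_def by simp
  show "indecomposable_group (F' j)" if "j \<in> J" for j
    using dec' that unfolding direct_decomposition_def by simp
  have iso: "G \<cong> sum_group I F" and iso': "G \<cong> sum_group J F'"
    using dec dec' unfolding direct_decomposition_def by simp_all
  show "sum_group I F \<cong> sum_group J F'"
    using iso_trans[OF group.iso_sym[OF G iso] iso'] .
  have "group (sum_group I F)"
    using indecomposable_groupD(1)[OF ind] by (rule sum_group)
  then show "group_center (sum_group I F) = {\<one>\<^bsub>sum_group I F\<^esub>}"
    using group_center_trivial_iso[OF G _ iso Z] by simp
qed

theorem proposition14:
  fixes G :: "('a, 'b) monoid_scheme"
  assumes "group G"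
    and "linear_group_over TYPE('k::field) G"
    and "finitely_generated_group G"
    and "group_center G = {\<one>\<^bsub>G\<^esub>}"
  shows "uniquely_directly_decomposable G"
proof -
  obtain d and \<phi> :: "'a \<Rightarrow> 'k mat" where \<phi>: "\<phi> \<in> hom G (GL_group d TYPE('k))" "inj_on \<phi> (carrier G)"
    using assms(2) unfolding linear_group_over_def by blast
  have "\<exists>I F. direct_decomposition G I F"
    using ex_direct_decomposition[OF assms(1) linear_nontrivial_decomposition_card_le[OF assms(1) \<phi> assms(4)]] .
  moreover have "\<exists>\<sigma>. bij_betw \<sigma> I J \<and> (\<forall>i\<in>I. F i \<cong> F' (\<sigma> i))"
    if "direct_decomposition G I F" "direct_decomposition G J F'" for I F J F'
    using direct_decomposition_unique[OF assms(1,4) that] .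
  ultimately show ?thesis unfolding uniquely_directly_decomposable_def by blast
qed

end
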